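(* Let $G$ be a simple undirected graph on $\{1,\dots,n\}$ with adjacency $g_{ij}$ and degrees $d_i$. Let the exposure be binary, $e_i=I\big(\sum_jg_{ij}z_j>0\big)$, and suppose $Y_i(z_i,e_i)=\alpha_i+\beta_iz_i+\gamma_ie_i$. Under a completely randomized design with $n_t$ treated and $n_c=n-n_t\ge1$ control units ($n_t\ge1$), if $n_c<\min_id_i$ then the estimator $$\hat\beta_{naive}=\frac{\sum_i Y_i^{obs}Z_i}{\sum_i Z_i}-\frac{\sum_i Y_i^{obs}(1-Z_i)}{\sum_i(1-Z_i)}$$ is unbiased for $\mathrm{DTE}=\frac1n\sum_i\big(Y_i(1,0)-Y_i(0,0)\big)$, i.e. $\mathbb E[\hat\beta_{naive}]=\mathrm{DTE}$.
   Context: Completely randomized design: $\mathbf Z$ is uniform over vectors in $\{0,1\}^n$ with exactly $n_t$ ones. $E_i=I(\sum_jg_{ij}Z_j>0)$ and $Y_i^{obs}=Y_i(Z_i,E_i)$. *)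

theory Defs
  imports "HOL-Probability.Probability"
begin

text \<open>Units are 1..n. A treatment assignment is z :: nat => nat with values in {0,1}
  on 1..n and 0 outside. Adjacency is a boolean relation g; g_ij = of_bool (g i j).\<close>

definition simple_graph :: "nat \<Rightarrow> (nat \<Rightarrow> nat \<Rightarrow> bool) \<Rightarrow> bool" where
  "simple_graph n g \<longleftrightarrow> (\<forall>i\<in>{1..n}. \<forall>j\<in>{1..n}. g i j = g j i) \<and> (\<forall>i\<in>{1..n}. \<not> g i i)"

definition degree :: "nat \<Rightarrow> (nat \<Rightarrow> nat \<Rightarrow> bool) \<Rightarrow> nat \<Rightarrow> nat" where
  "degree n g i = card {j\<in>{1..n}. g i j}"

definition crd_support :: "nat \<Rightarrow> nat \<Rightarrow> (nat \<Rightarrow> nat) set" where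
  "crd_support n nt = {z. (\<forall>i\<in>{1..n}. z i \<in> {0,1}) \<and> (\<forall>i. i \<notin> {1..n} \<longrightarrow> z i = 0)
                         \<and> (\<Sum>i=1..n. z i) = nt}"

definition crd :: "nat \<Rightarrow> nat \<Rightarrow> (nat \<Rightarrow> nat) pmf" where
  "crd n nt = pmf_of_set (crd_support n nt)"

definition exposure :: "nat \<Rightarrow> (nat \<Rightarrow> nat \<Rightarrow> bool) \<Rightarrow> (nat \<Rightarrow> nat) \<Rightarrow> nat \<Rightarrow> nat" where
  "exposure n g z i = (if (\<Sum>j=1..n. of_bool (g i j) * z j) > (0::nat) then 1 else 0)"

definition Yobs :: "nat \<Rightarrow> (nat \<Rightarrow> nat \<Rightarrow> bool) \<Rightarrow> (nat \<Rightarrow> nat \<Rightarrow> nat \<Rightarrow> real) \<Rightarrow> (nat \<Rightarrow> nat) \<Rightarrow> nat \<Rightarrow> real" where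
  "Yobs n g Y z i = Y i (z i) (exposure n g z i)"

definition beta_naive :: "nat \<Rightarrow> (nat \<Rightarrow> nat \<Rightarrow> bool) \<Rightarrow> (nat \<Rightarrow> nat \<Rightarrow> nat \<Rightarrow> real) \<Rightarrow> (nat \<Rightarrow> nat) \<Rightarrow> real" where
  "beta_naive n g Y z =
     (\<Sum>i=1..n. Yobs n g Y z i * real (z i)) / (\<Sum>i=1..n. real (z i))
   - (\<Sum>i=1..n. Yobs n g Y z i * (1 - real (z i))) / (\<Sum>i=1..n. (1 - real (z i)))"

definition DTE :: "nat \<Rightarrow> (nat \<Rightarrow> nat \<Rightarrow> nat \<Rightarrow> real) \<Rightarrow> real" where
  "DTE n Y = (1 / real n) * (\<Sum>i=1..n. Y i 1 0 - Y i 0 0)"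

end

theory Submission
  imports Defs
begin

(* Since fewer units are in control than any unit has neighbours, under every assignment of the
   design each unit has a treated neighbour, so e_i = 1 and the observed outcome is Y_i(z_i, 1).
   The naive estimator is then an ordinary difference in means contrasting Y_i(1,1) with Y_i(0,1).
   The design is invariant under permutations of the units, so each z_i has mean nt/n, which makes
   this difference in means unbiased for the average of Y_i(1,1) - Y_i(0,1); in the linear model
   that difference is beta_i = Y_i(1,0) - Y_i(0,0). *)

lemma finite_crd_support: "finite (crd_support n nt)"
proof (rule finite_subset)
  show "crd_support n nt \<subseteq> {z. \<forall>i. (i \<in> {1..n} \<longrightarrow> z i \<in> {0,1}) \<and> (i \<notin> {1..n} \<longrightarrow> z i = 0)}"
    unfolding crd_support_def by auto
  show "finite {z. \<forall>i. (i \<in> {1..n} \<longrightarrow> z i \<in> {0, 1::nat}) \<and> (i \<notin> {1..n} \<longrightarrow> z i = 0)}"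
    by (rule finite_set_of_finite_funs) auto
qed

lemma crd_support_nonempty:
  assumes "nt \<le> n"
  shows "crd_support n nt \<noteq> {}"
proof -
  define z :: "nat \<Rightarrow> nat" where "z i = of_bool (i \<in> {1..nt})" for i
  have "(\<Sum>i=1..n. z i) = card ({1..n} \<inter> {i. i \<in> {1..nt}})"
    unfolding z_def by (simp only: sum_of_bool_eq finite_atLeastAtMost of_nat_id)
  also have "{1..n} \<inter> {i. i \<in> {1..nt}} = {1..nt}"
    using assms by auto
  finally have "z \<in> crd_support n nt"
    using assms unfolding crd_support_def z_def by auto
  then show ?thesis by blast
qed

lemma set_pmf_crd: "nt \<le> n \<Longrightarrow> set_pmf (crd n nt) = crd_support n nt"
  unfolding crd_def by (simp add: crd_support_nonempty finite_crd_support)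

lemma integrable_crd: "nt \<le> n \<Longrightarrow> integrable (measure_pmf (crd n nt)) (f :: _ \<Rightarrow> real)"
  by (rule integrable_measure_pmf_finite) (simp add: set_pmf_crd finite_crd_support)

lemma expectation_crd_cong:
  assumes "nt \<le> n" and "\<And>z. z \<in> crd_support n nt \<Longrightarrow> f z = h z"
  shows "measure_pmf.expectation (crd n nt) f = measure_pmf.expectation (crd n nt) h"
  using assms by (intro integral_cong_AE) (auto intro!: AE_pmfI simp: set_pmf_crd)

lemma crd_support_binary: "z \<in> crd_support n nt \<Longrightarrow> i \<in> {1..n} \<Longrightarrow> z i = 0 \<or> z i = 1"
  unfolding crd_support_def by auto

lemma crd_support_sum_real: "z \<in> crd_support n nt \<Longrightarrow> (\<Sum>i=1..n. real (z i)) = real nt"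
  unfolding crd_support_def by (simp flip: of_nat_sum)

lemma card_controls_crd_support:
  assumes "z \<in> crd_support n nt"
  shows "card {i\<in>{1..n}. z i = 0} = n - nt"
proof -
  have "nt = (\<Sum>i=1..n. z i)"
    using assms unfolding crd_support_def by simp
  also have "\<dots> = (\<Sum>i=1..n. of_bool (z i \<noteq> 0))"
  proof (rule sum.cong[OF refl])
    fix i assume "i \<in> {1..n}"
    then show "z i = of_bool (z i \<noteq> 0)"
      using crd_support_binary[OF assms, of i] by auto
  qed
  also have "\<dots> = card {i\<in>{1..n}. z i \<noteq> 0}"
    by (simp add: sum_of_bool_eq Int_def)
  finally have "card {i\<in>{1..n}. z i \<noteq> 0} = nt" by simp
  moreover have "card {1..n} = card {i\<in>{1..n}. z i = 0} + card {i\<in>{1..n}. z i \<noteq> 0}"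
  proof -
    have "card {1..n} = card ({i\<in>{1..n}. z i = 0} \<union> {i\<in>{1..n}. z i \<noteq> 0})"
      by (rule arg_cong[where f = card]) auto
    also have "\<dots> = card {i\<in>{1..n}. z i = 0} + card {i\<in>{1..n}. z i \<noteq> 0}"
      by (rule card_Un_disjoint) auto
    finally show ?thesis .
  qed
  ultimately show ?thesis by simp
qed

lemma crd_support_permute:
  assumes "\<sigma> permutes {1..n}" and "z \<in> crd_support n nt"
  shows "z \<circ> \<sigma> \<in> crd_support n nt"
proof -
  have "(\<Sum>i=1..n. (z \<circ> \<sigma>) i) = (\<Sum>i=1..n. z i)"
    using sum.permute[OF assms(1), of z] by simp
  then show ?thesis
    using assms permutes_in_image[OF assms(1)] permutes_not_in[OF assms(1)]
    unfolding crd_support_def by auto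
qed

lemma map_pmf_crd_permute:
  assumes "\<sigma> permutes {1..n}" and "nt \<le> n"
  shows "map_pmf (\<lambda>z. z \<circ> \<sigma>) (crd n nt) = crd n nt"
proof -
  have "inj_on (\<lambda>z. z \<circ> \<sigma>) (crd_support n nt)"
  proof (rule inj_onI)
    fix z w :: "nat \<Rightarrow> nat" assume "z \<circ> \<sigma> = w \<circ> \<sigma>"
    then have "z \<circ> (\<sigma> \<circ> inv \<sigma>) = w \<circ> (\<sigma> \<circ> inv \<sigma>)"
      by (simp add: o_assoc)
    then show "z = w"
      by (simp add: permutes_inv_o(1)[OF assms(1)])
  qed
  moreover have "(\<lambda>z. z \<circ> \<sigma>) ` crd_support n nt = crd_support n nt"
  proof (intro equalityI subsetI)
    fix z assume "z \<in> crd_support n nt"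
    then have "z \<circ> inv \<sigma> \<in> crd_support n nt"
      using assms(1) by (intro crd_support_permute permutes_inv)
    moreover have "z = z \<circ> inv \<sigma> \<circ> \<sigma>"
      by (simp add: o_assoc[symmetric] permutes_inv_o(2)[OF assms(1)])
    ultimately show "z \<in> (\<lambda>z. z \<circ> \<sigma>) ` crd_support n nt" by blast
  qed (auto intro: crd_support_permute[OF assms(1)])
  ultimately show ?thesis
    unfolding crd_def
    by (simp add: map_pmf_of_set_inj finite_crd_support crd_support_nonempty[OF assms(2)])
qed

lemma expectation_crd_treatment:
  assumes "i \<in> {1..n}" and "nt \<le> n"
  shows "measure_pmf.expectation (crd n nt) (\<lambda>z. real (z i)) = real nt / real n"
proof -
  let ?E = "\<lambda>j. measure_pmf.expectation (crd n nt) (\<lambda>z. real (z j))"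
  have exchangeable: "?E j = ?E i" if "j \<in> {1..n}" for j
  proof -
    let ?\<tau> = "Transposition.transpose i j"
    have "?E i = measure_pmf.expectation (map_pmf (\<lambda>z. z \<circ> ?\<tau>) (crd n nt)) (\<lambda>z. real (z i))"
      using assms that by (simp add: map_pmf_crd_permute permutes_swap_id)
    also have "\<dots> = ?E j"
      by (simp add: integral_map_pmf)
    finally show ?thesis by simp
  qed
  have "real n * ?E i = (\<Sum>j=1..n. ?E j)"
    using exchangeable by simp
  also have "\<dots> = measure_pmf.expectation (crd n nt) (\<lambda>z. \<Sum>j=1..n. real (z j))"
    using assms(2) by (simp add: integrable_crd)
  also have "\<dots> = measure_pmf.expectation (crd n nt) (\<lambda>_. real nt)"
    using assms(2) crd_support_sum_real by (rule expectation_crd_cong)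
  finally show ?thesis
    using assms(1) by (simp add: field_simps)
qed

lemma expectation_crd_linear:
  assumes "nt \<le> n"
  shows "measure_pmf.expectation (crd n nt) (\<lambda>z. \<Sum>i=1..n. a i * real (z i))
           = (\<Sum>i=1..n. a i) * real nt / real n"
  using assms
  by (simp add: integrable_crd expectation_crd_treatment sum_distrib_right sum_divide_distrib)

theorem difference_in_means_unbiased:
  assumes "1 \<le> nt" and "nt < n"
  shows "measure_pmf.expectation (crd n nt)
           (\<lambda>z. (\<Sum>i=1..n. a i * real (z i)) / real nt
              - (\<Sum>i=1..n. b i * (1 - real (z i))) / real (n - nt))
         = (\<Sum>i=1..n. a i - b i) / real n"
proof -
  let ?E = "measure_pmf.expectation (crd n nt)"
  have nt_le_n: "nt \<le> n"
    using assms(2) by simp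
  have treated: "?E (\<lambda>z. \<Sum>i=1..n. a i * real (z i)) = (\<Sum>i=1..n. a i) * real nt / real n"
    using nt_le_n by (rule expectation_crd_linear)
  have "?E (\<lambda>z. \<Sum>i=1..n. b i * (1 - real (z i)))
      = ?E (\<lambda>z. (\<Sum>i=1..n. b i) - (\<Sum>i=1..n. b i * real (z i)))"
    by (simp add: algebra_simps sum_subtractf)
  also have "\<dots> = (\<Sum>i=1..n. b i) - (\<Sum>i=1..n. b i) * real nt / real n"
    by (simp only: Bochner_Integration.integral_diff[OF integrable_crd[OF nt_le_n] integrable_crd[OF nt_le_n]]
        expectation_crd_linear[OF nt_le_n]) simp
  also have "\<dots> = (\<Sum>i=1..n. b i) * real (n - nt) / real n"
    using assms(2) by (simp add: of_nat_diff field_simps)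
  finally have controls: "?E (\<lambda>z. \<Sum>i=1..n. b i * (1 - real (z i)))
      = (\<Sum>i=1..n. b i) * real (n - nt) / real n" .
  have "?E (\<lambda>z. (\<Sum>i=1..n. a i * real (z i)) / real nt
              - (\<Sum>i=1..n. b i * (1 - real (z i))) / real (n - nt))
      = (\<Sum>i=1..n. a i) * real nt / real n / real nt
        - (\<Sum>i=1..n. b i) * real (n - nt) / real n / real (n - nt)"
    by (simp only: Bochner_Integration.integral_diff[OF integrable_crd[OF nt_le_n] integrable_crd[OF nt_le_n]]
        integral_divide_zero treated controls)
  also have "\<dots> = (\<Sum>i=1..n. a i - b i) / real n"
    using assms by (simp add: sum_subtractf diff_divide_distrib)
  finally show ?thesis .
qed

lemma exposure_eq_1_if_few_controls:
  assumes "z \<in> crd_support n nt" and "i \<in> {1..n}" and "n - nt < degree n g i"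
  shows "exposure n g z i = 1"
proof (rule ccontr)
  assume "exposure n g z i \<noteq> 1"
  then have "\<forall>j\<in>{1..n}. of_bool (g i j) * z j = 0"
    unfolding exposure_def by (simp split: if_splits)
  then have "degree n g i \<le> card {j\<in>{1..n}. z j = 0}"
    unfolding degree_def by (intro card_mono) auto
  with assms(3) show False
    unfolding card_controls_crd_support[OF assms(1)] by simp
qed

lemma beta_naive_if_all_exposed:
  assumes "z \<in> crd_support n nt" and "nt < n"
    and "\<And>i. i \<in> {1..n} \<Longrightarrow> exposure n g z i = 1"
  shows "beta_naive n g Y z
           = (\<Sum>i=1..n. Y i 1 1 * real (z i)) / real nt
           - (\<Sum>i=1..n. Y i 0 1 * (1 - real (z i))) / real (n - nt)"
proof -
  have treated: "Yobs n g Y z i * real (z i) = Y i 1 1 * real (z i)"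
    and control: "Yobs n g Y z i * (1 - real (z i)) = Y i 0 1 * (1 - real (z i))"
    if "i \<in> {1..n}" for i
    using crd_support_binary[OF assms(1) that] assms(3)[OF that]
    unfolding Yobs_def by auto
  have "(\<Sum>i=1..n. 1 - real (z i)) = real (n - nt)"
    using assms(2) crd_support_sum_real[OF assms(1)] by (simp add: sum_subtractf)
  then show ?thesis
    unfolding beta_naive_def crd_support_sum_real[OF assms(1)]
    by (simp only: sum.cong[OF refl treated] sum.cong[OF refl control])
qed

theorem proposition16:
  fixes n nt :: nat and g :: "nat \<Rightarrow> nat \<Rightarrow> bool"
    and Y :: "nat \<Rightarrow> nat \<Rightarrow> nat \<Rightarrow> real" and \<alpha> \<beta> \<gamma> :: "nat \<Rightarrow> real"
  assumes "simple_graph n g"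
    and "\<And>i z e. i \<in> {1..n} \<Longrightarrow> z \<in> {0,1} \<Longrightarrow> e \<in> {0,1} \<Longrightarrow>
           Y i z e = \<alpha> i + \<beta> i * real z + \<gamma> i * real e"
    and "nt \<ge> 1" and "nt < n"
    and "n - nt < Min (degree n g ` {1..n})"
  shows "measure_pmf.expectation (crd n nt) (beta_naive n g Y) = DTE n Y"
proof -
  have exposed: "exposure n g z i = 1" if "z \<in> crd_support n nt" "i \<in> {1..n}" for z i
    using assms(5) Min_le[of "degree n g ` {1..n}" "degree n g i"] that
    by (intro exposure_eq_1_if_few_controls) auto
  have "measure_pmf.expectation (crd n nt) (beta_naive n g Y)
      = measure_pmf.expectation (crd n nt)
          (\<lambda>z. (\<Sum>i=1..n. Y i 1 1 * real (z i)) / real nt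
             - (\<Sum>i=1..n. Y i 0 1 * (1 - real (z i))) / real (n - nt))"
    using assms(4) exposed by (intro expectation_crd_cong beta_naive_if_all_exposed) auto
  also have "\<dots> = (\<Sum>i=1..n. Y i 1 1 - Y i 0 1) / real n"
    using assms(3,4) by (rule difference_in_means_unbiased)
  also have "\<dots> = DTE n Y"
  proof -
    have "Y i 1 1 - Y i 0 1 = Y i 1 0 - Y i 0 0" if "i \<in> {1..n}" for i
      using assms(2)[OF that] by simp
    then have "(\<Sum>i=1..n. Y i 1 1 - Y i 0 1) = (\<Sum>i=1..n. Y i 1 0 - Y i 0 0)"
      by (rule sum.cong[OF refl])
    then show ?thesis
      unfolding DTE_def by simp
  qed
  finally show ?thesis .
qed

end
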